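(* Under the standing setup below, let $y\in\mathbb Y$ be such that $\mathbf Ax=y$ is solvable in $\operatorname{dom}(\mathcal{Q})$. Let $(\delta_n)_{n\in\mathbb N}\subseteq(0,\infty)$ with $\delta_n\to0$, and let $(y_n)_{n\in\mathbb N}\subseteq\mathbb Y$ satisfy $\|y-y_n\|\le\delta_n$. Write $\mathcal{R}_n:=\mathcal{R}_{\delta_n}$ and $\boldsymbol\Phi_n:=\boldsymbol\Phi_{\theta(\delta_n)}$, and choose $x_n\in\operatorname{argmin}\{\mathcal{R}_n(z)\mid \|\mathbf Az-y_n\|\le\delta_n\}$. Then: (i) $(x_n)_{n\in\mathbb N}$ has at least one weak accumulation point; (ii) the weak limit $x^+$ of every weakly convergent subsequence $(x_{n(k)})_{k\in\mathbb N}$ is an $\mathcal{R}$-minimizing solution of $\mathbf Ax=y$, and $\mathcal{R}_{n(k)}(x_{n(k)})\to\mathcal{R}(x^+)$ as $k\to\infty$; (iii) if the $\mathcal{R}$-minimizing solution $x^+$ of $\mathbf Ax=y$ is unique, then $x_n\rightharpoonup x^+$ weakly and $\mathcal{R}_n(x_n)\to\mathcal{R}(x^+)$ as $n\to\infty$.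
   Context: Standing setup: $\mathbb X,\mathbb Y$ are real Hilbert spaces and $\mathbf A\colon\mathbb X\to\mathbb Y$ is a bounded linear operator (possibly with non-trivial kernel). Fix $\lambda>0$. Let $\boldsymbol\Phi\colon\mathbb X\to\mathbb X$ and, for each $\delta>0$, $\boldsymbol\Phi_{\theta(\delta)}\colon\mathbb X\to\mathbb X$ be maps (neural networks), and let $\mathcal{Q}\colon\mathbb X\to[0,\infty]$. Define $\mathcal{R}_\delta(x)=\tfrac12\|\boldsymbol\Phi_{\theta(\delta)}(x)-x\|^2+\lambda\mathcal{Q}(x)$ and $\mathcal{R}(x)=\tfrac12\|\boldsymbol\Phi(x)-x\|^2+\lambda\mathcal{Q}(x)$. Standing assumptions: (A1) $\boldsymbol\Phi$ and all $\boldsymbol\Phi_{\theta(\delta)}$ are weakly (sequentially) continuous; (A2) $\boldsymbol\Phi_{\theta(\delta)}\to\boldsymbol\Phi$ weakly uniformly on bounded sets as $\delta\to0$, meaning that for every bounded $B\subseteq\mathbb X$ and every $h\in\mathbb X$, $\sup_{x\in B}|\langle\boldsymbol\Phi_{\theta(\delta)}(x)-\boldsymbol\Phi(x),h\rangle|\to0$ as $\delta\to0$; (A3) $\boldsymbol\Phi_{\theta(\delta)}(x)\to\boldsymbol\Phi(x)$ in norm as $\delta\to0$ for every $\mathcal{R}$-minimizing solution $x$ of $\mathbf Ax=y$; (A4) $\mathcal{Q}$ is proper, coercive and weakly lower semicontinuous. An $\mathcal{R}$-minimizing solution of $\mathbf Ax=y$ is any element of $\operatorname{argmin}\{\mathcal{R}(x)\mid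 \mathbf Ax=y\}$. *)

theory Defs
  imports "HOL-Analysis.Analysis"
begin

definition weak_conv :: "(nat \<Rightarrow> 'a::real_inner) \<Rightarrow> 'a \<Rightarrow> bool" where
  "weak_conv xs x \<longleftrightarrow> (\<forall>h. (\<lambda>n. inner (xs n) h) \<longlonglongrightarrow> inner x h)"

definition weakly_seq_continuous :: "('a::real_inner \<Rightarrow> 'b::real_inner) \<Rightarrow> bool" where
  "weakly_seq_continuous F \<longleftrightarrow> (\<forall>xs x. weak_conv xs x \<longrightarrow> weak_conv (\<lambda>n. F (xs n)) (F x))"

definition weakly_lsc :: "('a::real_inner \<Rightarrow> ereal) \<Rightarrow> bool" where
  "weakly_lsc Q \<longleftrightarrow> (\<forall>xs x. weak_conv xs x \<longrightarrow> Q x \<le> liminf (\<lambda>n. Q (xs n)))"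

definition coercive :: "('a::real_normed_vector \<Rightarrow> ereal) \<Rightarrow> bool" where
  "coercive Q \<longleftrightarrow> (\<forall>M::real. \<exists>r. \<forall>x. norm x \<ge> r \<longrightarrow> Q x \<ge> ereal M)"

definition proper :: "('a \<Rightarrow> ereal) \<Rightarrow> bool" where
  "proper Q \<longleftrightarrow> (\<exists>x. Q x < \<infinity>)"

definition Reg :: "('a::real_normed_vector \<Rightarrow> 'a) \<Rightarrow> real \<Rightarrow> ('a \<Rightarrow> ereal) \<Rightarrow> 'a \<Rightarrow> ereal" where
  "Reg Phi lam Q x = ereal ((1/2) * (norm (Phi x - x))\<^sup>2) + ereal lam * Q x"

definition R_min_solution :: "('a \<Rightarrow> 'b) \<Rightarrow> 'b \<Rightarrow> ('a \<Rightarrow> ereal) \<Rightarrow> 'a \<Rightarrow> bool" where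
  "R_min_solution A y R x \<longleftrightarrow> A x = y \<and> (\<forall>z. A z = y \<longrightarrow> R x \<le> R z)"

end

theory Submission
  imports Defs "HOL-Library.Diagonal_Subsequence"
begin

text \<open>
  The argument is the direct method with a moving functional. Every exact solution is feasible for
  the constrained problems, so for an \<open>R\<close>-minimizing solution \<open>x\<^sup>\<dagger>\<close> we get
  \<open>R\<^sub>n(x\<^sub>n) \<le> R\<^sub>n(x\<^sup>\<dagger>) \<rightarrow> R(x\<^sup>\<dagger>)\<close> by (A3); coercivity of \<open>Q\<close> then bounds \<open>x\<^sub>n\<close>, and bounded
  sequences in a Hilbert space have weakly convergent subsequences. Along such a subsequence
  \<open>Ax\<^sub>n \<rightarrow> y\<close>, (A1) and (A2) give \<open>\<Phi>\<^sub>n(x\<^sub>n) - x\<^sub>n \<rightharpoonup> \<Phi>(x\<^sup>+) - x\<^sup>+\<close>, and weak lower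
  semicontinuity of the norm and of \<open>Q\<close> yields
  \<open>R(x\<^sup>+) \<le> liminf R\<^sub>n(x\<^sub>n) \<le> limsup R\<^sub>n(x\<^sub>n) \<le> R(x\<^sup>\<dagger>) \<le> R(x\<^sup>+)\<close>.
  Uniqueness turns subsequential into full convergence.
\<close>

section \<open>Weak convergence in Hilbert spaces\<close>

lemma weak_conv_unique:
  assumes "weak_conv xs a" "weak_conv xs b"
  shows "a = b"
proof -
  have "(\<lambda>n. inner (xs n) (a - b)) \<longlonglongrightarrow> inner a (a - b)"
       "(\<lambda>n. inner (xs n) (a - b)) \<longlonglongrightarrow> inner b (a - b)"
    using assms unfolding weak_conv_def by auto
  then have "inner a (a - b) = inner b (a - b)"
    using LIMSEQ_unique by blast
  then have "inner (a - b) (a - b) = 0"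
    by (simp add: inner_diff_left)
  then show ?thesis by simp
qed

lemma tendsto_imp_weak_conv:
  assumes "xs \<longlonglongrightarrow> a"
  shows "weak_conv xs a"
  using assms unfolding weak_conv_def by (auto intro!: tendsto_intros)

lemma weak_conv_diff:
  assumes "weak_conv xs a" "weak_conv ys b"
  shows "weak_conv (\<lambda>n. xs n - ys n) (a - b)"
  using assms unfolding weak_conv_def inner_diff_left by (auto intro!: tendsto_diff)

lemma weak_conv_subsubseq:
  fixes xs :: "nat \<Rightarrow> 'a::real_inner"
  assumes "\<And>r :: nat \<Rightarrow> nat. strict_mono r \<Longrightarrow> \<exists>s :: nat \<Rightarrow> nat. strict_mono s \<and> weak_conv (xs \<circ> r \<circ> s) x"
  shows "weak_conv xs x"
  unfolding weak_conv_def
proof (rule allI, rule ccontr)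
  fix h
  assume "\<not> (\<lambda>n. inner (xs n) h) \<longlonglongrightarrow> inner x h"
  then obtain e :: real where "e > 0"
    and not_near: "\<not> eventually (\<lambda>n. dist (inner (xs n) h) (inner x h) < e) sequentially"
    unfolding tendsto_iff by blast
  obtain r :: "nat \<Rightarrow> nat" where r: "strict_mono r" and far: "\<And>n. \<not> dist (inner (xs (r n)) h) (inner x h) < e"
    using not_eventually_sequentiallyD[OF not_near] by blast
  obtain s where "weak_conv (xs \<circ> r \<circ> s) x"
    using assms[OF r] by blast
  then have "(\<lambda>k. inner (xs (r (s k))) h) \<longlonglongrightarrow> inner x h"
    unfolding weak_conv_def by simp
  then obtain k where "dist (inner (xs (r (s k))) h) (inner x h) < e"
    using \<open>e > 0\<close> unfolding tendsto_iff eventually_sequentially by blast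
  with far show False by blast
qed

lemma parallelogram_law:
  fixes a b :: "'a::real_inner"
  shows "(norm (a - b))\<^sup>2 + (norm (a + b))\<^sup>2 = 2 * (norm a)\<^sup>2 + 2 * (norm b)\<^sup>2"
  unfolding power2_norm_eq_inner
  by (simp add: inner_diff_left inner_diff_right inner_add_left inner_add_right inner_commute)

lemma Cauchy_if_dist_le_null:
  fixes s :: "nat \<Rightarrow> 'a::metric_space"
  assumes e: "e \<longlonglongrightarrow> 0" and le: "\<And>m n. dist (s m) (s n) \<le> e m + e n"
  shows "Cauchy s"
proof (rule metric_CauchyI)
  fix \<epsilon> :: real
  assume "\<epsilon> > 0"
  then have "\<forall>\<^sub>F n in sequentially. dist (e n) 0 < \<epsilon> / 2"
    using e tendsto_iff half_gt_zero by blast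
  then obtain N where small: "\<And>n. n \<ge> N \<Longrightarrow> \<bar>e n\<bar> < \<epsilon> / 2"
    unfolding eventually_sequentially by auto
  have "dist (s m) (s n) < \<epsilon>" if "m \<ge> N" "n \<ge> N" for m n
    using le[of m n] small[OF that(1)] small[OF that(2)] by linarith
  then show "\<exists>N. \<forall>m\<ge>N. \<forall>n\<ge>N. dist (s m) (s n) < \<epsilon>"
    by blast
qed

lemma closest_point_exists_convex:
  fixes S :: "'a::{real_inner,complete_space} set"
  assumes "closed S" "convex S" "S \<noteq> {}"
  shows "\<exists>p\<in>S. \<forall>x\<in>S. norm (z - p) \<le> norm (z - x)"
proof -
  define D where "D = (\<lambda>x. (norm (z - x))\<^sup>2) ` S"
  define d where "d = Inf D"
  have d_le: "d \<le> (norm (z - x))\<^sup>2" if "x \<in> S" for x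
    unfolding d_def D_def using that by (auto intro!: cInf_lower bdd_belowI[of _ 0])
  have "\<exists>x\<in>S. (norm (z - x))\<^sup>2 < d + 1 / Suc n" for n
    using cInf_lessD[of D "d + 1 / Suc n"] \<open>S \<noteq> {}\<close> by (auto simp: d_def D_def)
  then obtain s where sS: "\<And>n. s n \<in> S" and s_min: "\<And>n. (norm (z - s n))\<^sup>2 < d + 1 / Suc n"
    by metis
  have s_close: "(norm (s m - s n))\<^sup>2 \<le> 2 / Suc m + 2 / Suc n" for m n
  proof -
    have "(1/2) *\<^sub>R (s m + s n) \<in> S"
      using convexD[OF \<open>convex S\<close> sS[of m] sS[of n], of "1/2" "1/2"] by (simp add: scaleR_add_right)
    then have "4 * d \<le> 4 * (norm (z - (1/2) *\<^sub>R (s m + s n)))\<^sup>2"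
      using d_le by simp
    moreover have "(z - s n) + (z - s m) = 2 *\<^sub>R (z - (1/2) *\<^sub>R (s m + s n))"
      by (simp add: algebra_simps scaleR_2)
    then have "4 * (norm (z - (1/2) *\<^sub>R (s m + s n)))\<^sup>2 = (norm ((z - s n) + (z - s m)))\<^sup>2"
      by (simp add: power_mult_distrib)
    moreover have "(norm (s m - s n))\<^sup>2 + (norm ((z - s n) + (z - s m)))\<^sup>2
        = 2 * (norm (z - s n))\<^sup>2 + 2 * (norm (z - s m))\<^sup>2"
      using parallelogram_law[of "z - s n" "z - s m"] by simp
    ultimately show ?thesis
      using s_min[of m] s_min[of n] by linarith
  qed
  have "Cauchy s"
  proof (rule Cauchy_if_dist_le_null)
    show "(\<lambda>n. sqrt (2 / Suc n)) \<longlonglongrightarrow> 0"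
      using tendsto_real_sqrt[OF tendsto_mult_left_zero[OF LIMSEQ_inverse_real_of_nat, of 2]]
      by (simp add: divide_inverse mult.commute)
    fix m n
    have "dist (s m) (s n) = sqrt ((norm (s m - s n))\<^sup>2)"
      by (simp add: dist_norm)
    also have "\<dots> \<le> sqrt (2 / Suc m + 2 / Suc n)"
      using s_close by (rule real_sqrt_le_mono)
    also have "\<dots> \<le> sqrt (2 / Suc m) + sqrt (2 / Suc n)"
      by (rule sqrt_add_le_add_sqrt) auto
    finally show "dist (s m) (s n) \<le> sqrt (2 / Suc m) + sqrt (2 / Suc n)" .
  qed
  then obtain p where sp: "s \<longlonglongrightarrow> p"
    using Cauchy_convergent_iff convergent_def by blast
  have "p \<in> S"
    using \<open>closed S\<close> sS sp closed_sequentially by blast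
  have "(\<lambda>n. (norm (z - s n))\<^sup>2) \<longlonglongrightarrow> (norm (z - p))\<^sup>2"
    using sp by (intro tendsto_intros)
  moreover have "(\<lambda>n. d + 1 / Suc n) \<longlonglongrightarrow> d"
    using tendsto_add[OF tendsto_const LIMSEQ_inverse_real_of_nat, of d]
    by (simp add: inverse_eq_divide)
  ultimately have "(norm (z - p))\<^sup>2 \<le> d"
    by (rule LIMSEQ_le) (use s_min less_imp_le in blast)
  have "norm (z - p) \<le> norm (z - x)" if "x \<in> S" for x
  proof (rule power2_le_imp_le)
    show "(norm (z - p))\<^sup>2 \<le> (norm (z - x))\<^sup>2"
      using \<open>(norm (z - p))\<^sup>2 \<le> d\<close> d_le[OF that] by linarith
  qed simp
  with \<open>p \<in> S\<close> show ?thesis by blast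
qed

lemma linear_coeff_eq_0_if_quadratic_bound:
  fixes b c :: real
  assumes "\<And>t. t * b \<le> t\<^sup>2 * c" and "c \<ge> 0"
  shows "b = 0"
proof -
  define k where "k = c + 1"
  have "k > 0"
    using \<open>c \<ge> 0\<close> by (simp add: k_def)
  have "b / k * b * k\<^sup>2 \<le> (b / k)\<^sup>2 * c * k\<^sup>2"
    using assms(1) by (rule mult_right_mono) simp
  then have "b\<^sup>2 * k \<le> b\<^sup>2 * c"
    using \<open>k > 0\<close> by (simp add: power2_eq_square)
  then show "b = 0" by (simp add: k_def algebra_simps)
qed

lemma orthogonal_projection_exists:
  fixes M :: "'a::{real_inner,complete_space} set"
  assumes "closed M" "subspace M"
  shows "\<exists>p\<in>M. \<forall>m\<in>M. inner (z - p) m = 0"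
proof -
  obtain p where "p \<in> M" and p_min: "\<And>x. x \<in> M \<Longrightarrow> norm (z - p) \<le> norm (z - x)"
    using closest_point_exists_convex[OF \<open>closed M\<close> subspace_imp_convex[OF \<open>subspace M\<close>]]
      subspace_0[OF \<open>subspace M\<close>] by blast
  have "2 * inner (z - p) m = 0" if "m \<in> M" for m
  proof (rule linear_coeff_eq_0_if_quadratic_bound)
    fix t :: real
    have "p + t *\<^sub>R m \<in> M"
      using \<open>subspace M\<close> \<open>p \<in> M\<close> \<open>m \<in> M\<close> by (simp add: subspace_add subspace_scale)
    then have "norm (z - p) \<le> norm (z - p - t *\<^sub>R m)"
      using p_min by (simp add: algebra_simps)
    then have "(norm (z - p))\<^sup>2 \<le> (norm (z - p - t *\<^sub>R m))\<^sup>2"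
      by (simp add: power_mono)
    also have "\<dots> = (norm (z - p))\<^sup>2 - 2 * t * inner (z - p) m + t\<^sup>2 * (norm m)\<^sup>2"
      unfolding power2_norm_eq_inner
      by (simp add: inner_diff_left inner_diff_right inner_commute power2_eq_square algebra_simps)
    finally show "t * (2 * inner (z - p) m) \<le> t\<^sup>2 * (norm m)\<^sup>2"
      by simp
  qed simp
  with \<open>p \<in> M\<close> show ?thesis by auto
qed

lemma riesz_representation:
  fixes f :: "'a::{real_inner,complete_space} \<Rightarrow> real"
  assumes "bounded_linear f"
  shows "\<exists>g. \<forall>x. f x = inner x g"
proof (cases "\<forall>x. f x = 0")
  case True
  then show ?thesis by (intro exI[of _ 0]) auto
next
  case False
  then obtain z where "f z \<noteq> 0" by blast
  interpret f: bounded_linear f by fact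
  have "closed {x. f x = 0}"
    using continuous_closed_preimage_constant[OF f.continuous_on[OF continuous_on_id], of UNIV 0]
    by simp
  moreover have "subspace {x. f x = 0}"
    by (auto simp: subspace_def f.add f.scale f.zero)
  ultimately obtain p where "f p = 0" and orth: "\<And>m. f m = 0 \<Longrightarrow> inner (z - p) m = 0"
    using orthogonal_projection_exists[of "{x. f x = 0}" z] by auto
  define w where "w = z - p"
  have "f w \<noteq> 0"
    using \<open>f z \<noteq> 0\<close> \<open>f p = 0\<close> by (simp add: w_def f.diff)
  then have "w \<noteq> 0" by auto
  have "f x = inner x ((f w / inner w w) *\<^sub>R w)" for x
  proof -
    have "f (f x *\<^sub>R w - f w *\<^sub>R x) = 0"
      by (simp add: f.diff f.scale)
    then have "inner w (f x *\<^sub>R w - f w *\<^sub>R x) = 0"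
      using orth unfolding w_def by (metis inner_commute)
    then have "f x * inner w w = f w * inner x w"
      by (simp add: inner_diff_right inner_commute)
    with \<open>w \<noteq> 0\<close> show ?thesis by (simp add: field_simps)
  qed
  then show ?thesis by blast
qed

lemma bounded_linear_weak_conv:
  fixes A :: "'a::{real_inner,complete_space} \<Rightarrow> 'b::real_inner"
  assumes "bounded_linear A" "weak_conv xs x"
  shows "weak_conv (\<lambda>n. A (xs n)) (A x)"
  unfolding weak_conv_def
proof
  fix h
  have "bounded_linear (\<lambda>x. inner (A x) h)"
    using bounded_linear_compose[OF bounded_linear_inner_left \<open>bounded_linear A\<close>] .
  then obtain g where g: "\<And>x. inner (A x) h = inner x g"
    using riesz_representation by blast
  show "(\<lambda>n. inner (A (xs n)) h) \<longlonglongrightarrow> inner (A x) h"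
    unfolding g using \<open>weak_conv xs x\<close> unfolding weak_conv_def by blast
qed

lemma inner_convergent_subsequence:
  fixes xs :: "nat \<Rightarrow> 'a::real_inner"
  assumes bound: "\<And>n. norm (xs n) \<le> C"
  shows "\<exists>r. strict_mono r \<and> (\<forall>m. convergent (\<lambda>k. inner (xs (r k)) (xs m)))"
proof -
  interpret subseqs "\<lambda>m s. convergent (\<lambda>k. inner (xs (s k)) (xs m))"
  proof
    fix m and s :: "nat \<Rightarrow> nat"
    have "\<bar>inner (xs (s k)) (xs m)\<bar> \<le> C * C" for k
      using Cauchy_Schwarz_ineq2[of "xs (s k)" "xs m"] bound[of "s k"] bound[of m]
      by (smt (verit) mult_mono norm_ge_zero)
    then have "bounded (range (\<lambda>k. inner (xs (s k)) (xs m)))"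
      by (auto simp: bounded_iff)
    then obtain l r where "strict_mono r" "((\<lambda>k. inner (xs (s k)) (xs m)) \<circ> r) \<longlonglongrightarrow> l"
      using bounded_imp_convergent_subsequence by blast
    then show "\<exists>r. strict_mono r \<and> convergent (\<lambda>k. inner (xs ((s \<circ> r) k)) (xs m))"
      by (auto simp: convergent_def comp_def)
  qed
  have "convergent (\<lambda>k. inner (xs (diagseq k)) (xs m))" for m
  proof -
    have "convergent (\<lambda>k. inner (xs ((diagseq \<circ> (+) (Suc m)) k)) (xs m))"
    proof (rule diagseq_holds)
      fix r s n
      assume "strict_mono (r :: nat \<Rightarrow> nat)" "convergent (\<lambda>k. inner (xs (s k)) (xs n))"
      from convergent_subseq_convergent[OF this(2) this(1)]
      show "convergent (\<lambda>k. inner (xs ((s \<circ> r) k)) (xs n))"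
        by (simp add: comp_def)
    qed
    then obtain l where "(\<lambda>k. inner (xs (diagseq (k + Suc m))) (xs m)) \<longlonglongrightarrow> l"
      unfolding convergent_def by (auto simp: add.commute)
    then have "(\<lambda>k. inner (xs (diagseq k)) (xs m)) \<longlonglongrightarrow> l"
      by (rule LIMSEQ_offset)
    then show ?thesis
      unfolding convergent_def by blast
  qed
  then show ?thesis
    using subseq_diagseq by blast
qed

lemma subspace_inner_convergent:
  "subspace {h. convergent (\<lambda>k. inner (y k) h)}"
  by (auto simp: subspace_def inner_add_right convergent_add convergent_const
      intro: convergent_mult)

lemma closed_inner_convergent:
  fixes y :: "nat \<Rightarrow> 'a::real_inner"
  assumes bound: "\<And>k. norm (y k) \<le> C"
  shows "closed {h. convergent (\<lambda>k. inner (y k) h)}"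
  unfolding closed_sequential_limits
proof (intro allI impI, elim conjE)
  fix hs h
  assume conv: "\<forall>j. hs j \<in> {h. convergent (\<lambda>k. inner (y k) h)}" and "hs \<longlonglongrightarrow> h"
  have "C \<ge> 0"
    using norm_ge_zero[of "y 0"] bound[of 0] by linarith
  have "Cauchy (\<lambda>k. inner (y k) h)"
  proof (rule metric_CauchyI)
    fix e :: real
    assume "e > 0"
    then have "e / (4 * (C + 1)) > 0"
      using \<open>C \<ge> 0\<close> by simp
    then obtain j where j: "norm (hs j - h) < e / (4 * (C + 1))"
      using \<open>hs \<longlonglongrightarrow> h\<close> unfolding LIMSEQ_iff by blast
    have close: "\<bar>inner (y k) h - inner (y k) (hs j)\<bar> \<le> e / 4" for k
    proof -
      have "\<bar>inner (y k) h - inner (y k) (hs j)\<bar> = \<bar>inner (y k) (hs j - h)\<bar>"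
        by (simp add: inner_diff_right)
      also have "\<dots> \<le> norm (y k) * norm (hs j - h)"
        by (rule Cauchy_Schwarz_ineq2)
      also have "\<dots> \<le> (C + 1) * (e / (4 * (C + 1)))"
        using bound[of k] j \<open>C \<ge> 0\<close> by (intro mult_mono) auto
      also have "\<dots> = e / 4"
        using \<open>C \<ge> 0\<close> by (simp add: field_simps add_nonneg_eq_0_iff)
      finally show ?thesis .
    qed
    have "Cauchy (\<lambda>k. inner (y k) (hs j))"
      using conv Cauchy_convergent_iff by blast
    from metric_CauchyD[OF this, of "e / 2"] \<open>e > 0\<close>
    obtain N where N: "\<And>m n. m \<ge> N \<Longrightarrow> n \<ge> N \<Longrightarrow> dist (inner (y m) (hs j)) (inner (y n) (hs j)) < e / 2"
      by auto
    have "dist (inner (y m) h) (inner (y n) h) < e" if "m \<ge> N" "n \<ge> N" for m n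
      using N[OF that] close[of m] close[of n] unfolding dist_real_def by linarith
    then show "\<exists>N. \<forall>m\<ge>N. \<forall>n\<ge>N. dist (inner (y m) h) (inner (y n) h) < e"
      by blast
  qed
  then show "h \<in> {h. convergent (\<lambda>k. inner (y k) h)}"
    by (simp add: Cauchy_convergent_iff)
qed

lemma weak_conv_if_inner_convergent:
  fixes y :: "nat \<Rightarrow> 'a::{real_inner,complete_space}"
  assumes bound: "\<And>k. norm (y k) \<le> C" and conv: "\<And>h. convergent (\<lambda>k. inner (y k) h)"
  shows "\<exists>x. weak_conv y x"
proof -
  define L where "L h = lim (\<lambda>k. inner (y k) h)" for h
  have L: "(\<lambda>k. inner (y k) h) \<longlonglongrightarrow> L h" for h
    using conv[of h] by (simp add: L_def convergent_LIMSEQ_iff)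
  have "bounded_linear L"
  proof (rule bounded_linear_intro[where K = C])
    fix a b
    have "(\<lambda>k. inner (y k) (a + b)) \<longlonglongrightarrow> L a + L b"
      unfolding inner_add_right by (intro tendsto_intros L)
    then show "L (a + b) = L a + L b"
      using L LIMSEQ_unique by blast
  next
    fix c :: real and a
    have "(\<lambda>k. inner (y k) (c *\<^sub>R a)) \<longlonglongrightarrow> c *\<^sub>R L a"
      unfolding inner_scaleR_right by (simp, intro tendsto_intros L)
    then show "L (c *\<^sub>R a) = c *\<^sub>R L a"
      using L LIMSEQ_unique by blast
  next
    fix a
    have "\<bar>inner (y k) a\<bar> \<le> norm a * C" for k
      using Cauchy_Schwarz_ineq2[of "y k" a] mult_right_mono[OF bound[of k], of "norm a"]
      by (simp add: mult.commute)
    then have "\<bar>L a\<bar> \<le> norm a * C"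
      by (intro LIMSEQ_le_const2[OF tendsto_rabs[OF L]]) auto
    then show "norm (L a) \<le> norm a * C" by simp
  qed
  then obtain g where "\<And>h. L h = inner h g"
    using riesz_representation by blast
  then have "weak_conv y g"
    unfolding weak_conv_def using L by (metis inner_commute)
  then show ?thesis by blast
qed

lemma bounded_imp_weak_conv_subsequence:
  fixes xs :: "nat \<Rightarrow> 'a::{real_inner,complete_space}"
  assumes bound: "\<And>n. norm (xs n) \<le> C"
  shows "\<exists>r x. strict_mono r \<and> weak_conv (xs \<circ> r) x"
proof -
  obtain r where "strict_mono r" and conv_xs: "\<And>m. convergent (\<lambda>k. inner (xs (r k)) (xs m))"
    using inner_convergent_subsequence[of xs, OF bound] by blast
  define y where "y = xs \<circ> r"
  define V where "V = {h. convergent (\<lambda>k. inner (y k) h)}"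
  have y_bound: "norm (y k) \<le> C" for k
    using bound by (simp add: y_def)
  have "closed V" "subspace V"
    unfolding V_def using closed_inner_convergent[OF y_bound] subspace_inner_convergent by auto
  have y_in_V: "y k \<in> V" for k
    using conv_xs by (simp add: V_def y_def)
  \<comment> \<open>Testing against the projection onto \<open>V\<close> does not change the inner products with any \<open>y k\<close>.\<close>
  have "convergent (\<lambda>k. inner (y k) h)" for h
  proof -
    obtain p where "p \<in> V" and orth: "\<And>v. v \<in> V \<Longrightarrow> inner (h - p) v = 0"
      using orthogonal_projection_exists[OF \<open>closed V\<close> \<open>subspace V\<close>] by blast
    have "inner (y k) h = inner (y k) p" for k
      using orth[OF y_in_V[of k]] by (simp add: inner_commute[of "h - p"] inner_diff_right)
    then show ?thesis
      using \<open>p \<in> V\<close> by (simp add: V_def)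
  qed
  then obtain x where "weak_conv y x"
    using weak_conv_if_inner_convergent[of y, OF y_bound] by blast
  then show ?thesis
    using \<open>strict_mono r\<close> y_def by blast
qed

lemma weak_conv_uniform_approx:
  assumes cont: "weakly_seq_continuous Phi"
    and unif: "\<And>h. uniform_limit B (\<lambda>d x. inner (Phid d x - Phi x) h) (\<lambda>x. 0) F"
    and d: "filterlim d F sequentially" and in_B: "\<And>k. xs k \<in> B" and "weak_conv xs x"
  shows "weak_conv (\<lambda>k. Phid (d k) (xs k)) (Phi x)"
  unfolding weak_conv_def
proof
  fix h
  have "(\<lambda>k. inner (Phid (d k) (xs k) - Phi (xs k)) h) \<longlonglongrightarrow> 0"
  proof (rule tendstoI)
    fix e :: real
    assume "e > 0"
    have "\<forall>\<^sub>F t in F. \<forall>x\<in>B. dist (inner (Phid t x - Phi x) h) 0 < e"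
      using uniform_limitD[OF unif \<open>e > 0\<close>] .
    then have "\<forall>\<^sub>F k in sequentially. \<forall>x\<in>B. dist (inner (Phid (d k) x - Phi x) h) 0 < e"
      using d unfolding filterlim_iff by blast
    then show "\<forall>\<^sub>F k in sequentially. dist (inner (Phid (d k) (xs k) - Phi (xs k)) h) 0 < e"
      by (rule eventually_mono) (use in_B in blast)
  qed
  moreover have "(\<lambda>k. inner (Phi (xs k)) h) \<longlonglongrightarrow> inner (Phi x) h"
    using cont \<open>weak_conv xs x\<close> unfolding weakly_seq_continuous_def weak_conv_def by blast
  ultimately have "(\<lambda>k. inner (Phid (d k) (xs k) - Phi (xs k)) h + inner (Phi (xs k)) h)
      \<longlonglongrightarrow> 0 + inner (Phi x) h"
    by (rule tendsto_add)
  then show "(\<lambda>k. inner (Phid (d k) (xs k)) h) \<longlonglongrightarrow> inner (Phi x) h"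
    by (simp add: inner_diff_left)
qed

section \<open>The regularization functional\<close>

lemma weak_conv_half_norm_square_liminf:
  fixes us :: "nat \<Rightarrow> 'a::real_inner"
  assumes "weak_conv us u"
  shows "ereal ((1/2) * (norm u)\<^sup>2) \<le> liminf (\<lambda>k. ereal ((1/2) * (norm (us k))\<^sup>2))"
proof -
  \<comment> \<open>\<open>\<langle>v, u\<rangle> - \<parallel>u\<parallel>\<^sup>2/2 \<le> \<parallel>v\<parallel>\<^sup>2/2\<close>, and the left-hand side is weakly continuous in \<open>v\<close>.\<close>
  have "(\<lambda>k. inner (us k) u) \<longlonglongrightarrow> inner u u"
    using assms unfolding weak_conv_def by blast
  then have "(\<lambda>k. inner (us k) u - (1/2) * (norm u)\<^sup>2) \<longlonglongrightarrow> inner u u - (1/2) * (norm u)\<^sup>2"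
    by (intro tendsto_diff tendsto_const)
  then have "(\<lambda>k. ereal (inner (us k) u - (1/2) * (norm u)\<^sup>2)) \<longlonglongrightarrow> ereal ((1/2) * (norm u)\<^sup>2)"
    by (simp add: power2_norm_eq_inner)
  then have "ereal ((1/2) * (norm u)\<^sup>2) = liminf (\<lambda>k. ereal (inner (us k) u - (1/2) * (norm u)\<^sup>2))"
    by (rule lim_imp_Liminf[symmetric, rotated]) simp
  also have "\<dots> \<le> liminf (\<lambda>k. ereal ((1/2) * (norm (us k))\<^sup>2))"
  proof (intro Liminf_mono always_eventually allI ereal_less_eq(3)[THEN iffD2])
    fix k
    have "0 \<le> (norm (us k - u))\<^sup>2" by simp
    then show "inner (us k) u - (1/2) * (norm u)\<^sup>2 \<le> (1/2) * (norm (us k))\<^sup>2"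
      unfolding power2_norm_eq_inner by (simp add: inner_diff_left inner_diff_right inner_commute)
  qed
  finally show ?thesis .
qed

lemma Reg_le_liminf:
  fixes xs us :: "nat \<Rightarrow> 'a::real_inner"
  assumes "weak_conv xs x" and "weak_conv us (P x - x)"
    and "weakly_lsc Q" and Q_nonneg: "\<And>x. Q x \<ge> 0" and "lam > 0"
  shows "Reg P lam Q x \<le> liminf (\<lambda>k. ereal ((1/2) * (norm (us k))\<^sup>2) + ereal lam * Q (xs k))"
proof -
  have "Reg P lam Q x = ereal ((1/2) * (norm (P x - x))\<^sup>2) + ereal lam * Q x"
    by (simp add: Reg_def)
  also have "\<dots> \<le> liminf (\<lambda>k. ereal ((1/2) * (norm (us k))\<^sup>2)) + ereal lam * liminf (\<lambda>k. Q (xs k))"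
  proof (rule add_mono)
    show "ereal ((1/2) * (norm (P x - x))\<^sup>2) \<le> liminf (\<lambda>k. ereal ((1/2) * (norm (us k))\<^sup>2))"
      using assms(2) by (rule weak_conv_half_norm_square_liminf)
    show "ereal lam * Q x \<le> ereal lam * liminf (\<lambda>k. Q (xs k))"
      using assms(1,3,5) unfolding weakly_lsc_def by (intro ereal_mult_left_mono) auto
  qed
  also have "ereal lam * liminf (\<lambda>k. Q (xs k)) = liminf (\<lambda>k. ereal lam * Q (xs k))"
    using \<open>lam > 0\<close> by (intro Liminf_ereal_mult_left[symmetric]) auto
  also have "liminf (\<lambda>k. ereal ((1/2) * (norm (us k))\<^sup>2)) + liminf (\<lambda>k. ereal lam * Q (xs k))
      \<le> liminf (\<lambda>k. ereal ((1/2) * (norm (us k))\<^sup>2) + ereal lam * Q (xs k))"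
    using \<open>lam > 0\<close> Q_nonneg by (intro Liminf_add_le) auto
  finally show ?thesis .
qed

lemma weakly_lsc_Reg:
  fixes P :: "'a::real_inner \<Rightarrow> 'a"
  assumes "weakly_seq_continuous P" "weakly_lsc Q" "\<And>x. Q x \<ge> 0" "lam > 0"
  shows "weakly_lsc (Reg P lam Q)"
  unfolding weakly_lsc_def
proof (intro allI impI)
  fix xs :: "nat \<Rightarrow> 'a" and x
  assume "weak_conv xs x"
  moreover from this have "weak_conv (\<lambda>k. P (xs k) - xs k) (P x - x)"
    using assms(1) weak_conv_diff unfolding weakly_seq_continuous_def by blast
  ultimately show "Reg P lam Q x \<le> liminf (\<lambda>k. Reg P lam Q (xs k))"
    using Reg_le_liminf[OF _ _ assms(2-4)] by (simp add: Reg_def)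
qed

lemma Reg_nonneg:
  assumes "\<And>x. Q x \<ge> 0" "lam > 0"
  shows "Reg P lam Q x \<ge> 0"
  using assms unfolding Reg_def by (intro add_nonneg_nonneg) auto

lemma Reg_less_infinity_iff:
  assumes "Q x \<ge> 0" "lam > 0"
  shows "Reg P lam Q x < \<infinity> \<longleftrightarrow> Q x < \<infinity>"
  using assms by (cases "Q x") (auto simp: Reg_def)

lemma Reg_finite:
  assumes "Q x < \<infinity>" "Q x \<ge> 0"
  shows "Reg P lam Q x = ereal ((1/2) * (norm (P x - x))\<^sup>2 + lam * real_of_ereal (Q x))"
  using assms by (cases "Q x") (auto simp: Reg_def)

lemma Reg_sublevel_norm_bound:
  assumes "coercive Q" "lam > 0" "\<And>x. Q x \<ge> 0"
  shows "\<exists>r. \<forall>P x. Reg P lam Q x \<le> ereal c \<longrightarrow> norm x < r"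
proof -
  obtain r where r: "\<And>x. norm x \<ge> r \<Longrightarrow> Q x \<ge> ereal (c / lam + 1)"
    using \<open>coercive Q\<close> unfolding coercive_def by blast
  have "norm x < r" if "Reg P lam Q x \<le> ereal c" for P x
  proof (rule ccontr)
    assume "\<not> norm x < r"
    then have "ereal lam * ereal (c / lam + 1) \<le> ereal lam * Q x"
      using r \<open>lam > 0\<close> by (intro ereal_mult_left_mono) auto
    also have "\<dots> \<le> Reg P lam Q x"
      unfolding Reg_def by (simp add: add_increasing)
    also have "\<dots> \<le> ereal c"
      by (fact that)
    finally have "lam * (c / lam + 1) \<le> c"
      by simp
    moreover have "lam * (c / lam + 1) = c + lam"
      using \<open>lam > 0\<close> by (simp add: field_simps)
    ultimately show False
      using \<open>lam > 0\<close> by simp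
  qed
  then show ?thesis by blast
qed

lemma coercive_Reg:
  assumes "coercive Q" "lam > 0" "\<And>x. Q x \<ge> 0"
  shows "coercive (Reg P lam Q)"
  unfolding coercive_def
proof
  fix M :: real
  obtain r where "\<And>x. Reg P lam Q x \<le> ereal M \<Longrightarrow> norm x < r"
    using Reg_sublevel_norm_bound[OF assms] by blast
  then show "\<exists>r. \<forall>x. r \<le> norm x \<longrightarrow> ereal M \<le> Reg P lam Q x"
    by (meson linorder_not_le less_imp_le)
qed

lemma R_min_solution_exists:
  fixes A :: "'a::{real_inner,complete_space} \<Rightarrow> 'b::real_inner" and F :: "'a \<Rightarrow> ereal"
  assumes "bounded_linear A" "weakly_lsc F" "coercive F" and F_nonneg: "\<And>x. F x \<ge> 0"
    and "A x0 = y" "F x0 < \<infinity>"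
  shows "\<exists>x. R_min_solution A y F x"
proof -
  define v where "v = (INF x\<in>{x. A x = y}. F x)"
  have v_le: "v \<le> F x" if "A x = y" for x
    using that unfolding v_def by (auto intro: INF_lower)
  have "v \<noteq> \<infinity>" "v \<ge> 0"
    using v_le[OF \<open>A x0 = y\<close>] \<open>F x0 < \<infinity>\<close> F_nonneg by (auto simp: v_def intro: INF_greatest)
  then obtain w where v: "v = ereal w"
    by (cases v) auto
  have "\<exists>z. A z = y \<and> F z < ereal (w + 1 / Suc j)" for j
  proof -
    have "v < ereal (w + 1 / Suc j)"
      using v by simp
    then show ?thesis
      unfolding v_def Inf_less_iff by auto
  qed
  then obtain zs where zs_sol: "\<And>j. A (zs j) = y" and zs_min: "\<And>j. F (zs j) < ereal (w + 1 / Suc j)"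
    by metis
  obtain r where r: "\<And>x. r \<le> norm x \<Longrightarrow> ereal (w + 1) \<le> F x"
    using \<open>coercive F\<close> unfolding coercive_def by blast
  have "norm (zs j) \<le> r" for j
  proof (rule ccontr)
    assume "\<not> norm (zs j) \<le> r"
    then have "ereal (w + 1) \<le> F (zs j)"
      using r by simp
    moreover have "F (zs j) < ereal (w + 1)"
      using zs_min[of j] by (rule order_less_le_trans) simp
    ultimately show False
      by simp
  qed
  then obtain s x where "strict_mono s" and x: "weak_conv (zs \<circ> s) x"
    using bounded_imp_weak_conv_subsequence by blast
  have "weak_conv (\<lambda>k. A ((zs \<circ> s) k)) (A x)"
    using bounded_linear_weak_conv[OF \<open>bounded_linear A\<close> x] .
  moreover have "weak_conv (\<lambda>k. A ((zs \<circ> s) k)) y"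
    using zs_sol by (simp add: weak_conv_def)
  ultimately have "A x = y"
    by (rule weak_conv_unique)
  have "(\<lambda>k. 1 / real (Suc (s k))) \<longlonglongrightarrow> 0"
    using LIMSEQ_subseq_LIMSEQ[OF LIMSEQ_inverse_real_of_nat \<open>strict_mono s\<close>]
    by (simp add: comp_def inverse_eq_divide)
  from tendsto_add[OF tendsto_const this, of w]
  have "(\<lambda>k. ereal (w + 1 / Suc (s k))) \<longlonglongrightarrow> ereal w"
    by simp
  have "F x \<le> liminf (\<lambda>k. F ((zs \<circ> s) k))"
    using \<open>weakly_lsc F\<close> x unfolding weakly_lsc_def by blast
  also have "\<dots> \<le> liminf (\<lambda>k. ereal (w + 1 / Suc (s k)))"
    using zs_min by (intro Liminf_mono always_eventually allI less_imp_le) simp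
  also have "\<dots> = v"
    using \<open>(\<lambda>k. ereal (w + 1 / Suc (s k))) \<longlonglongrightarrow> ereal w\<close> v by (simp add: lim_imp_Liminf)
  finally have "F x \<le> v" .
  with \<open>A x = y\<close> v_le show ?thesis
    unfolding R_min_solution_def by (blast intro: order_trans)
qed

section \<open>Convergence of the constrained minimizers\<close>

locale network_regularization =
  fixes A :: "'a::{real_inner,complete_space} \<Rightarrow> 'b::real_inner"
    and Phi :: "'a \<Rightarrow> 'a"
    and Phid :: "real \<Rightarrow> 'a \<Rightarrow> 'a"
    and Q :: "'a \<Rightarrow> ereal"
    and lam :: real
    and y :: 'b
    and delta :: "nat \<Rightarrow> real"
    and yn :: "nat \<Rightarrow> 'b"
    and xn :: "nat \<Rightarrow> 'a"
  assumes A_lin: "bounded_linear A"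
    and lam_pos: "lam > 0"
    and Phi_weakly_continuous: "weakly_seq_continuous Phi"
    and Phid_weak_uniform: "\<And>B h. bounded B \<Longrightarrow>
      uniform_limit B (\<lambda>d x. inner (Phid d x - Phi x) h) (\<lambda>x. 0) (at_right 0)"
    and Phid_tendsto: "\<And>x. R_min_solution A y (Reg Phi lam Q) x \<Longrightarrow>
      ((\<lambda>d. Phid d x) \<longlongrightarrow> Phi x) (at_right 0)"
    and Q_nonneg: "\<And>x. Q x \<ge> 0"
    and Q_coercive: "coercive Q"
    and Q_weakly_lsc: "weakly_lsc Q"
    and solvable: "\<exists>x. A x = y \<and> Q x < \<infinity>"
    and delta_pos: "\<And>n. delta n > 0"
    and delta_lim: "delta \<longlonglongrightarrow> 0"
    and data: "\<And>n. norm (y - yn n) \<le> delta n"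
    and xn_feasible: "\<And>n. norm (A (xn n) - yn n) \<le> delta n"
    and xn_minimal: "\<And>n z. norm (A z - yn n) \<le> delta n \<Longrightarrow>
      Reg (Phid (delta n)) lam Q (xn n) \<le> Reg (Phid (delta n)) lam Q z"
begin

abbreviation R :: "'a \<Rightarrow> ereal" where
  "R \<equiv> Reg Phi lam Q"

abbreviation Rn :: "nat \<Rightarrow> 'a \<Rightarrow> ereal" where
  "Rn n \<equiv> Reg (Phid (delta n)) lam Q"

lemma min_solution_exists: "\<exists>x. R_min_solution A y R x"
proof -
  obtain x0 where "A x0 = y" "Q x0 < \<infinity>"
    using solvable by blast
  then have "R x0 < \<infinity>"
    using Reg_less_infinity_iff[of Q x0 lam Phi] Q_nonneg lam_pos by blast
  then show ?thesis
    using R_min_solution_exists[OF A_lin weakly_lsc_Reg coercive_Reg Reg_nonneg \<open>A x0 = y\<close>]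
      Phi_weakly_continuous Q_weakly_lsc Q_nonneg lam_pos Q_coercive by blast
qed

lemma min_solution_finite:
  assumes "R_min_solution A y R x"
  shows "Q x < \<infinity>"
proof -
  obtain x0 where "A x0 = y" "Q x0 < \<infinity>"
    using solvable by blast
  then have "R x \<le> R x0" "R x0 < \<infinity>"
    using assms Reg_less_infinity_iff[of Q x0 lam Phi] Q_nonneg lam_pos
    unfolding R_min_solution_def by auto
  then show ?thesis
    using Reg_less_infinity_iff[of Q x lam Phi] Q_nonneg lam_pos by (meson le_less_trans)
qed

lemma delta_at_right: "filterlim delta (at_right 0) sequentially"
  using delta_lim delta_pos by (intro tendsto_imp_filterlim_at_right) auto

lemma Rn_at_min_solution:
  assumes "R_min_solution A y R x"
  shows "(\<lambda>n. Rn n x) \<longlonglongrightarrow> R x" and "\<exists>K. \<forall>n. Rn n x \<le> ereal K"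
proof -
  define q where "q = real_of_ereal (Q x)"
  define f where "f n = (1/2) * (norm (Phid (delta n) x - x))\<^sup>2 + lam * q" for n
  have Rn_eq: "Rn n x = ereal (f n)" for n
    unfolding f_def q_def using min_solution_finite[OF assms] Q_nonneg[of x] by (rule Reg_finite)
  have "(\<lambda>n. Phid (delta n) x) \<longlonglongrightarrow> Phi x"
    using filterlim_compose[OF Phid_tendsto[OF assms] delta_at_right] .
  then have f_lim: "f \<longlonglongrightarrow> (1/2) * (norm (Phi x - x))\<^sup>2 + lam * q"
    unfolding f_def by (intro tendsto_intros)
  then show "(\<lambda>n. Rn n x) \<longlonglongrightarrow> R x"
    unfolding Rn_eq q_def using Reg_finite[of Q x, OF min_solution_finite[OF assms] Q_nonneg[of x]]
    by simp
  obtain K where K: "\<And>n. norm (f n) \<le> K"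
    using BseqE[OF convergent_imp_Bseq[OF convergentI[OF f_lim]]] by metis
  have "Rn n x \<le> ereal K" for n
    unfolding Rn_eq using abs_ge_self[of "f n"] K[of n] by simp
  then show "\<exists>K. \<forall>n. Rn n x \<le> ereal K"
    by blast
qed

lemma Rn_xn_le:
  assumes "A x = y"
  shows "Rn n (xn n) \<le> Rn n x"
  using xn_minimal data assms by simp

lemma xn_bounded: "\<exists>C. \<forall>n. norm (xn n) \<le> C"
proof -
  obtain xd where "R_min_solution A y R xd"
    using min_solution_exists by blast
  then obtain K where K: "\<And>n. Rn n xd \<le> ereal K" and "A xd = y"
    using Rn_at_min_solution(2) unfolding R_min_solution_def by blast
  obtain r where r: "\<And>P x. Reg P lam Q x \<le> ereal K \<Longrightarrow> norm x < r"
    using Reg_sublevel_norm_bound[OF Q_coercive lam_pos Q_nonneg] by blast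
  have "norm (xn n) \<le> r" for n
    using r[OF order_trans[OF Rn_xn_le[OF \<open>A xd = y\<close>, of n] K]] by (rule less_imp_le)
  then show ?thesis by blast
qed

lemma A_xn_tendsto: "(\<lambda>n. A (xn n)) \<longlonglongrightarrow> y"
proof (rule LIM_zero_cancel, rule Lim_null_comparison)
  show "\<forall>\<^sub>F n in sequentially. norm (A (xn n) - y) \<le> 2 * delta n"
  proof (rule always_eventually, rule allI)
    fix n
    have "norm (A (xn n) - y) \<le> norm (A (xn n) - yn n) + norm (y - yn n)"
      using norm_triangle_ineq4[of "A (xn n) - yn n" "y - yn n"] by simp
    then show "norm (A (xn n) - y) \<le> 2 * delta n"
      using xn_feasible[of n] data[of n] by linarith
  qed
  show "(\<lambda>n. 2 * delta n) \<longlonglongrightarrow> 0"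
    using tendsto_mult_left[OF delta_lim, of 2] by simp
qed

lemma subseq_limit_min_solution:
  assumes "strict_mono r" and xp: "weak_conv (xn \<circ> r) xp"
  shows "R_min_solution A y R xp" and "(\<lambda>k. Rn (r k) (xn (r k))) \<longlonglongrightarrow> R xp"
proof -
  have "weak_conv (\<lambda>k. A ((xn \<circ> r) k)) (A xp)"
    using bounded_linear_weak_conv[OF A_lin xp] .
  moreover have "weak_conv (\<lambda>k. A ((xn \<circ> r) k)) y"
    using LIMSEQ_subseq_LIMSEQ[OF A_xn_tendsto \<open>strict_mono r\<close>]
    by (intro tendsto_imp_weak_conv) (simp add: comp_def)
  ultimately have "A xp = y"
    by (rule weak_conv_unique)
  obtain xd where xd: "R_min_solution A y R xd"
    using min_solution_exists by blast
  then have "A xd = y" "R xd \<le> R xp"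
    using \<open>A xp = y\<close> unfolding R_min_solution_def by auto
  have "bounded (range xn)"
    using xn_bounded unfolding bounded_iff by blast
  \<comment> \<open>(A2) is what lets the varying networks pass to the weak limit.\<close>
  have "weak_conv (\<lambda>k. Phid (delta (r k)) ((xn \<circ> r) k)) (Phi xp)"
    using weak_conv_uniform_approx[OF Phi_weakly_continuous Phid_weak_uniform[OF \<open>bounded (range xn)\<close>]
        filterlim_compose[OF delta_at_right filterlim_subseq[OF \<open>strict_mono r\<close>]] _ xp]
    by (simp add: comp_def)
  then have "weak_conv (\<lambda>k. Phid (delta (r k)) ((xn \<circ> r) k) - (xn \<circ> r) k) (Phi xp - xp)"
    using xp by (rule weak_conv_diff)
  from Reg_le_liminf[of "xn \<circ> r" xp _ Phi, OF xp this Q_weakly_lsc Q_nonneg lam_pos]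
  have lower: "R xp \<le> liminf (\<lambda>k. Rn (r k) (xn (r k)))"
    by (simp add: Reg_def)
  have "limsup (\<lambda>k. Rn (r k) (xn (r k))) \<le> limsup (\<lambda>k. Rn (r k) xd)"
    using Rn_xn_le[OF \<open>A xd = y\<close>] by (intro Limsup_mono) auto
  also have "\<dots> = R xd"
    using LIMSEQ_subseq_LIMSEQ[OF Rn_at_min_solution(1)[OF xd] \<open>strict_mono r\<close>]
    by (intro lim_imp_Limsup) (simp_all add: comp_def)
  finally have upper: "limsup (\<lambda>k. Rn (r k) (xn (r k))) \<le> R xd" .
  have "liminf (\<lambda>k. Rn (r k) (xn (r k))) \<le> limsup (\<lambda>k. Rn (r k) (xn (r k)))"
    by (rule Liminf_le_Limsup) simp
  with lower upper \<open>R xd \<le> R xp\<close>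
  have "liminf (\<lambda>k. Rn (r k) (xn (r k))) = R xp" "limsup (\<lambda>k. Rn (r k) (xn (r k))) = R xp"
    and "R xp = R xd"
    by order+
  then show "(\<lambda>k. Rn (r k) (xn (r k))) \<longlonglongrightarrow> R xp"
    by (intro Liminf_eq_Limsup) simp_all
  show "R_min_solution A y R xp"
    using xd \<open>A xp = y\<close> \<open>R xp = R xd\<close> unfolding R_min_solution_def by simp
qed

lemma weak_conv_unique_min_solution:
  assumes "R_min_solution A y R xp" and unique: "\<And>z. R_min_solution A y R z \<Longrightarrow> z = xp"
  shows "weak_conv xn xp"
proof (rule weak_conv_subsubseq)
  fix r :: "nat \<Rightarrow> nat"
  assume "strict_mono r"
  obtain C where "\<And>n. norm (xn n) \<le> C"
    using xn_bounded by blast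
  then obtain s z where "strict_mono s" and z: "weak_conv (xn \<circ> r \<circ> s) z"
    using bounded_imp_weak_conv_subsequence[of "xn \<circ> r" C] by auto
  then have "R_min_solution A y R z"
    using subseq_limit_min_solution(1)[OF strict_mono_o[OF \<open>strict_mono r\<close> \<open>strict_mono s\<close>]]
    by (simp add: o_assoc)
  with z unique \<open>strict_mono s\<close> show "\<exists>s. strict_mono s \<and> weak_conv (xn \<circ> r \<circ> s) xp"
    by blast
qed

end

theorem theorem1:
  fixes A :: "'a::{real_inner,complete_space} \<Rightarrow> 'b::{real_inner,complete_space}"
    and Phi :: "'a \<Rightarrow> 'a"
    and Phid :: "real \<Rightarrow> 'a \<Rightarrow> 'a"
    and Q :: "'a \<Rightarrow> ereal"
    and lam :: real
    and y :: 'b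
    and delta :: "nat \<Rightarrow> real"
    and yn :: "nat \<Rightarrow> 'b"
    and xn :: "nat \<Rightarrow> 'a"
  assumes A_lin: "bounded_linear A"
    and lam_pos: "lam > 0"
    and A1: "weakly_seq_continuous Phi" "\<And>d. d > 0 \<Longrightarrow> weakly_seq_continuous (Phid d)"
    and A2: "\<And>B h. bounded B \<Longrightarrow>
               uniform_limit B (\<lambda>d x. inner (Phid d x - Phi x) h) (\<lambda>x. 0) (at_right 0)"
    and A3: "\<And>x. R_min_solution A y (Reg Phi lam Q) x \<Longrightarrow>
               ((\<lambda>d. Phid d x) \<longlongrightarrow> Phi x) (at_right 0)"
    and Q_nonneg: "\<And>x. Q x \<ge> 0"
    and A4: "proper Q" "coercive Q" "weakly_lsc Q"
    and solvable: "\<exists>x. A x = y \<and> Q x < \<infinity>"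
    and delta_pos: "\<And>n. delta n > 0"
    and delta_lim: "delta \<longlonglongrightarrow> 0"
    and data: "\<And>n. norm (y - yn n) \<le> delta n"
    and xn_feas: "\<And>n. norm (A (xn n) - yn n) \<le> delta n"
    and xn_min: "\<And>n z. norm (A z - yn n) \<le> delta n \<Longrightarrow>
                   Reg (Phid (delta n)) lam Q (xn n) \<le> Reg (Phid (delta n)) lam Q z"
  shows "(\<exists>r x. strict_mono r \<and> weak_conv (xn \<circ> r) x)
    \<and> (\<forall>r xp. strict_mono r \<and> weak_conv (xn \<circ> r) xp \<longrightarrow>
          R_min_solution A y (Reg Phi lam Q) xp \<and>
          ((\<lambda>k. Reg (Phid (delta (r k))) lam Q (xn (r k))) \<longlongrightarrow> Reg Phi lam Q xp) sequentially)
    \<and> (\<forall>xp. R_min_solution A y (Reg Phi lam Q) xp \<and>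
            (\<forall>z. R_min_solution A y (Reg Phi lam Q) z \<longrightarrow> z = xp) \<longrightarrow>
          weak_conv xn xp \<and>
          ((\<lambda>n. Reg (Phid (delta n)) lam Q (xn n)) \<longlongrightarrow> Reg Phi lam Q xp) sequentially)"
proof -
  interpret network_regularization A Phi Phid Q lam y delta yn xn
    by (rule network_regularization.intro) (fact A_lin lam_pos A1(1) A2 A3 Q_nonneg A4(2,3) solvable delta_pos delta_lim
        data xn_feas xn_min)+
  obtain C where "\<And>n. norm (xn n) \<le> C"
    using xn_bounded by blast
  then have "\<exists>r x. strict_mono r \<and> weak_conv (xn \<circ> r) x"
    by (rule bounded_imp_weak_conv_subsequence)
  moreover have "weak_conv xn xp \<and> (\<lambda>n. Rn n (xn n)) \<longlonglongrightarrow> R xp"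
    if "R_min_solution A y R xp" "\<forall>z. R_min_solution A y R z \<longrightarrow> z = xp" for xp
  proof
    show "weak_conv xn xp"
      using weak_conv_unique_min_solution that by blast
    then show "(\<lambda>n. Rn n (xn n)) \<longlonglongrightarrow> R xp"
      using subseq_limit_min_solution(2)[of id] by (simp add: strict_mono_def)
  qed
  ultimately show ?thesis
    using subseq_limit_min_solution by blast
qed

end
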